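(* Let $f\in\mathcal A_C$, $g\in L^1$, $F(x)=\int_{-\infty}^xf$, $G(x)=\int_{-\infty}^xg$. Then (a) $f*g=(F*g)'=(f*G)'$ as distributions; (b) for all $-\infty\le\alpha<\beta\le\infty$, $\int_\alpha^\beta f*g=F*g(\beta)-F*g(\alpha)=f*G(\beta)-f*G(\alpha)$.
   Context: $C^0(\overline{\mathbb R})$: continuous $F:\mathbb R\to\mathbb R$ with finite limits $F(\pm\infty)$, and values at $\pm\infty$ mean these limits. $\mathcal B_C=\{F\in C^0(\overline{\mathbb R}):F(-\infty)=0\}$; $\mathcal A_C=\{f\in\mathcal D'(\mathbb R): f=F'\text{ (distributional derivative) for some } F\in\mathcal B_C\}$, the primitive being unique, $\int_a^bf=F(b)-F(a)$. Alexiewicz norm: $\|f\|=\sup_I|\int_If|$ over intervals $I$. For $h\in\mathcal A_C$ with primitive $H$ and $g$ of bounded variation, $\int_{-\infty}^\infty hg=H(\infty)g(\infty)-\int_{-\infty}^\infty H\,dg$ (Henstock–Stieltjes). For $f\in\mathcal A_C$ with primitive $F$, $f(x-\cdot)$ has primitive $y\mapsto F(\infty)-F(x-y)$; for $g$ of bounded variation $f*g(x)=\int_{-\infty}^\infty f(x-y)g(y)\,dy$ (product integral). For $g\in L^1$, $f*g\in\mathcal A_C$ is the unique element with $\|f*g_n-f*g\|\to0$ for any $g_n\in L^1$ of bounded variation with $\|g_n-g\|_1\to0$ (well defined). $F*g(x)=\int_{-\infty}^\infty F(x-y)g(y)\,dy$ is a Lebesgue integral. *)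

theory Defs
  imports "HOL-Analysis.Analysis"
begin

(* B_C: primitives. An element f of A_C is represented by its (unique) primitive F in B_C. *)
definition BC :: "(real \<Rightarrow> real) \<Rightarrow> bool" where
  "BC F \<longleftrightarrow> continuous_on UNIV F \<and> (F \<longlongrightarrow> 0) at_bot \<and> (\<exists>L. (F \<longlongrightarrow> L) at_top)"

definition val_top :: "(real \<Rightarrow> real) \<Rightarrow> real" where
  "val_top F = Lim at_top F"

definition BV :: "(real \<Rightarrow> real) \<Rightarrow> bool" where
  "BV g \<longleftrightarrow> (\<exists>B. \<forall>xs::real list. sorted xs \<longrightarrow>
      (\<Sum>i<length xs - 1. \<bar>g (xs ! Suc i) - g (xs ! i)\<bar>) \<le> B)"

definition L1 :: "(real \<Rightarrow> real) \<Rightarrow> bool" where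
  "L1 g \<longleftrightarrow> integrable lborel g"

definition has_HS_integral_on :: "(real \<Rightarrow> real) \<Rightarrow> (real \<Rightarrow> real) \<Rightarrow> real \<Rightarrow> real \<Rightarrow> real \<Rightarrow> bool" where
  "has_HS_integral_on P g a b I \<longleftrightarrow>
     (\<forall>e>0. \<exists>\<gamma>. gauge \<gamma> \<and> (\<forall>D. D tagged_division_of {a..b} \<and> \<gamma> fine D \<longrightarrow>
        \<bar>(\<Sum>(x,K)\<in>D. P x * (g (Sup K) - g (Inf K))) - I\<bar> < e))"

definition has_HS_integral :: "(real \<Rightarrow> real) \<Rightarrow> (real \<Rightarrow> real) \<Rightarrow> real \<Rightarrow> bool" where
  "has_HS_integral P g I \<longleftrightarrow>
     (\<exists>J. (\<forall>a b. a \<le> b \<longrightarrow> has_HS_integral_on P g a b (J a b)) \<and>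
          ((\<lambda>(a,b). J a b) \<longlongrightarrow> I) (at_bot \<times>\<^sub>F at_top))"

definition HS_integral :: "(real \<Rightarrow> real) \<Rightarrow> (real \<Rightarrow> real) \<Rightarrow> real" where
  "HS_integral P g = (THE I. has_HS_integral P g I)"

(* f * g for f in A_C with primitive F and g of bounded variation (product integral):
   int f(x-y) g(y) dy = P(inf) g(inf) - int P dg, where P(y) = F(inf) - F(x-y), P(inf) = F(inf) *)
definition conv_BV :: "(real \<Rightarrow> real) \<Rightarrow> (real \<Rightarrow> real) \<Rightarrow> real \<Rightarrow> real" where
  "conv_BV F g x = val_top F * Lim at_top g - HS_integral (\<lambda>y. val_top F - F (x - y)) g"

(* H is the primitive of f * g (f in A_C with primitive F, g in L^1): H in B_C and for every
   sequence g_n in L^1 of bounded variation with ||g_n - g||_1 \<rightarrow> 0, the functions f * g_n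
   converge to H' in the Alexiewicz norm. *)
definition is_conv_L1_prim :: "(real \<Rightarrow> real) \<Rightarrow> (real \<Rightarrow> real) \<Rightarrow> (real \<Rightarrow> real) \<Rightarrow> bool" where
  "is_conv_L1_prim F g H \<longleftrightarrow> BC H \<and>
     (\<forall>gn :: nat \<Rightarrow> real \<Rightarrow> real.
        (\<forall>n. L1 (gn n) \<and> BV (gn n)) \<and>
        ((\<lambda>n. LINT y|lborel. \<bar>gn n y - g y\<bar>) \<longlonglongrightarrow> 0) \<longrightarrow>
        (\<forall>n a b. conv_BV F (gn n) integrable_on {a..b}) \<and>
        (\<forall>e>0. \<forall>\<^sub>F n in sequentially. \<forall>a b. a \<le> b \<longrightarrow>
            \<bar>integral {a..b} (conv_BV F (gn n)) - (H b - H a)\<bar> \<le> e))"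

definition conv_L :: "(real \<Rightarrow> real) \<Rightarrow> (real \<Rightarrow> real) \<Rightarrow> real \<Rightarrow> real" where
  "conv_L F g x = (LINT y|lborel. F (x - y) * g y)"

definition test_fun :: "(real \<Rightarrow> real) \<Rightarrow> bool" where
  "test_fun \<phi> \<longleftrightarrow> (\<forall>n x. ((deriv ^^ n) \<phi>) differentiable (at x)) \<and>
                    (\<exists>R. \<forall>x. \<bar>x\<bar> > R \<longrightarrow> \<phi> x = 0)"

definition same_dist_deriv :: "(real \<Rightarrow> real) \<Rightarrow> (real \<Rightarrow> real) \<Rightarrow> bool" where
  "same_dist_deriv P Q \<longleftrightarrow> (\<forall>\<phi>. test_fun \<phi> \<longrightarrow>
      integrable lborel (\<lambda>x. P x * deriv \<phi> x) \<and> integrable lborel (\<lambda>x. Q x * deriv \<phi> x) \<and>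
      - (LINT x|lborel. P x * deriv \<phi> x) = - (LINT x|lborel. Q x * deriv \<phi> x))"

definition ext_val :: "(real \<Rightarrow> real) \<Rightarrow> ereal \<Rightarrow> real \<Rightarrow> bool" where
  "ext_val P t v \<longleftrightarrow>
     (if t = \<infinity> then (P \<longlongrightarrow> v) at_top
      else if t = -\<infinity> then (P \<longlongrightarrow> v) at_bot
      else v = P (real_of_ereal t))"

end

theory Submission
  imports Defs
begin

(*
  The theorem follows once we know that the primitive H of f*g coincides with the Lebesgue
  convolution Phi = F*g and also with the product-integral convolution f*G.

  1. For h in L^1 with primitive Gh and P bounded continuous, the Henstock-Stieltjes integral
     of P against dGh is the Lebesgue integral of P*h.  Applied to P(y) = F(inf) - F(x-y) this
     gives  f*Gh = F*h  pointwise, in particular  f*G = Phi.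
  2. The Steklov averages g_d = (G(.+d) - G)/d are of bounded variation, lie in L^1 and tend to
     g in L^1 as d -> 0 (Lebesgue differentiation and Scheffe's lemma).  Since g_d is itself the
     primitive of (g(.+d) - g)/d, step 1 gives  f*g_d = (Phi(.+d) - Phi)/d.
  3. Phi is continuous, so the integral of (Phi(.+d) - Phi)/d over [a,b] tends to
     Phi(b) - Phi(a).  The defining property of H therefore yields H(b) - H(a) = Phi(b) - Phi(a);
     as both vanish at -inf, H = Phi.
  With H = Phi = f*G all claims reduce to facts about Phi: it is continuous (so it defines a
  distribution) and has limits at both ends of the line.
*)

lemma has_HS_integral_on_unique:
  assumes "has_HS_integral_on P g a b I1" "has_HS_integral_on P g a b I2"
  shows "I1 = I2"
proof (rule ccontr)
  assume ne: "I1 \<noteq> I2"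
  define e where "e = \<bar>I1 - I2\<bar> / 2"
  have e: "e > 0" using ne by (simp add: e_def)
  obtain \<gamma>1 where \<gamma>1: "gauge \<gamma>1" "\<forall>D. D tagged_division_of {a..b} \<and> \<gamma>1 fine D \<longrightarrow>
        \<bar>(\<Sum>(x,K)\<in>D. P x * (g (Sup K) - g (Inf K))) - I1\<bar> < e"
    using assms(1)[unfolded has_HS_integral_on_def, rule_format, OF e] by blast
  obtain \<gamma>2 where \<gamma>2: "gauge \<gamma>2" "\<forall>D. D tagged_division_of {a..b} \<and> \<gamma>2 fine D \<longrightarrow>
        \<bar>(\<Sum>(x,K)\<in>D. P x * (g (Sup K) - g (Inf K))) - I2\<bar> < e"
    using assms(2)[unfolded has_HS_integral_on_def, rule_format, OF e] by blast
  obtain D where D: "D tagged_division_of {a..b}" "(\<lambda>x. \<gamma>1 x \<inter> \<gamma>2 x) fine D"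
    using fine_division_exists_real[OF gauge_Int[OF \<gamma>1(1) \<gamma>2(1)]] by metis
  then have "\<bar>(\<Sum>(x,K)\<in>D. P x * (g (Sup K) - g (Inf K))) - I1\<bar> < e"
    and "\<bar>(\<Sum>(x,K)\<in>D. P x * (g (Sup K) - g (Inf K))) - I2\<bar> < e"
    using \<gamma>1(2) \<gamma>2(2) unfolding fine_Int by blast+
  moreover have "\<bar>S - I1\<bar> < e \<Longrightarrow> \<bar>S - I2\<bar> < e \<Longrightarrow> False" for S :: real
    unfolding e_def by (auto simp: abs_if split: if_splits)
  ultimately show False by blast
qed

text \<open>Hence the improper integral, a limit over the nontrivial filter of intervals
  exhausting the line, is unique too.\<close>

lemma HS_integral_eqI:
  assumes "has_HS_integral P g I"
  shows "HS_integral P g = I"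
  unfolding HS_integral_def
proof (rule the_equality)
  show "has_HS_integral P g I" by fact
next
  fix I' assume "has_HS_integral P g I'"
  then obtain J' where J': "\<forall>a b. a \<le> b \<longrightarrow> has_HS_integral_on P g a b (J' a b)"
     "((\<lambda>(a,b). J' a b) \<longlongrightarrow> I') (at_bot \<times>\<^sub>F at_top)"
    unfolding has_HS_integral_def by blast
  obtain J where J: "\<forall>a b. a \<le> b \<longrightarrow> has_HS_integral_on P g a b (J a b)"
     "((\<lambda>(a,b). J a b) \<longlongrightarrow> I) (at_bot \<times>\<^sub>F at_top)"
    using assms unfolding has_HS_integral_def by blast
  have "\<forall>\<^sub>F p in at_bot \<times>\<^sub>F at_top. fst p \<le> (0::real) \<and> (0::real) \<le> snd p"
    using eventually_prodI[OF eventually_le_at_bot[of "0::real"] eventually_ge_at_top[of "0::real"]]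
    by simp
  then have "\<forall>\<^sub>F p in at_bot \<times>\<^sub>F at_top. (\<lambda>(a,b). J' a b) p = (\<lambda>(a,b). J a b) p"
  proof eventually_elim
    case (elim p)
    then have "fst p \<le> snd p" by linarith
    then show ?case
      using has_HS_integral_on_unique[OF J'(1)[rule_format] J(1)[rule_format]]
      by (simp add: case_prod_beta)
  qed
  with J'(2) have "((\<lambda>(a,b). J a b) \<longlongrightarrow> I') (at_bot \<times>\<^sub>F at_top)"
    by (rule Lim_transform_eventually)
  moreover have "(at_bot \<times>\<^sub>F at_top :: (real \<times> real) filter) \<noteq> bot"
    by (simp add: prod_filter_eq_bot)
  ultimately show "I' = I" using J(2) tendsto_unique by blast
qed

section \<open>Primitives of integrable functions\<close>

definition prim :: "(real \<Rightarrow> real) \<Rightarrow> real \<Rightarrow> real" where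
  "prim u x = (LINT t:{..x}|lborel. u t)"

lemma integrable_imp_set_integrable:
  fixes h :: "real \<Rightarrow> real"
  assumes "integrable lborel h" "A \<in> sets borel"
  shows "set_integrable lborel A h"
  unfolding set_integrable_def using integrable_mult_indicator[of A lborel h] assms by simp

lemma set_integral_eq_HK_integral:
  fixes h :: "real \<Rightarrow> real"
  assumes "integrable lborel h" "S \<in> sets borel"
  shows "h integrable_on S" "(LINT y:S|lborel. h y) = integral S h"
  using set_borel_integral_eq_integral[OF integrable_imp_set_integrable[OF assms]] by auto

lemma prim_diff:
  fixes h :: "real \<Rightarrow> real"
  assumes h: "integrable lborel h" and uv: "u \<le> v"
  shows "prim h v - prim h u = integral {u..v} h"
proof -
  have "{..v} = {..u} \<union> {u<..v}" "{..u} \<inter> {u<..v} = {}" using uv by auto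
  then have "prim h v = prim h u + (LINT y:{u<..v}|lborel. h y)"
    unfolding prim_def
    using set_integral_Un[of "{..u}" "{u<..v}", OF _ integrable_imp_set_integrable[OF h]
        integrable_imp_set_integrable[OF h]] by simp
  moreover have "(LINT y:{u<..v}|lborel. h y) = (LINT y:{u..v}|lborel. h y)"
  proof (rule set_integral_cong_set)
    show "set_borel_measurable lborel {u..v} h" "set_borel_measurable lborel {u<..v} h"
      using integrable_imp_set_integrable[OF h]
      by (auto simp: set_borel_measurable_def set_integrable_def)
    show "AE x in lborel. (x \<in> {u..v}) = (x \<in> {u<..v})"
      using AE_lborel_singleton[of u] by eventually_elim auto
  qed
  ultimately show ?thesis using set_integral_eq_HK_integral(2)[OF h, of "{u..v}"] by simp
qed

lemma prim_at_top:
  fixes h :: "real \<Rightarrow> real"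
  assumes h: "integrable lborel h"
  shows "(prim h \<longlongrightarrow> (LINT y|lborel. h y)) at_top"
  unfolding prim_def[abs_def] set_lebesgue_integral_def
proof (rule integral_dominated_convergence_at_top[where w="\<lambda>y. \<bar>h y\<bar>"])
  show "AE y in lborel. ((\<lambda>t. indicator {..t} y *\<^sub>R h y) \<longlongrightarrow> h y) at_top"
  proof (rule AE_I2)
    fix y :: real
    have "\<forall>\<^sub>F t in at_top. indicator {..t} y *\<^sub>R h y = h y"
      using eventually_ge_at_top[of y] by eventually_elim (auto simp: indicator_def)
    then show "((\<lambda>t. indicator {..t} y *\<^sub>R h y) \<longlongrightarrow> h y) at_top"
      by (rule tendsto_eventually)
  qed
  show "\<forall>\<^sub>F t in at_top. AE y in lborel. norm (indicator {..t} y *\<^sub>R h y) \<le> \<bar>h y\<bar>"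
    by (auto simp: indicator_def)
qed (use h in auto)

lemma prim_at_bot:
  fixes h :: "real \<Rightarrow> real"
  assumes h: "integrable lborel h"
  shows "(prim h \<longlongrightarrow> 0) at_bot"
  unfolding prim_def[abs_def] set_lebesgue_integral_def filterlim_at_bot_mirror
proof -
  have "((\<lambda>t. LINT y|lborel. indicator {..-t} y *\<^sub>R h y) \<longlongrightarrow> (LINT y|lborel. 0 * h y)) at_top"
  proof (rule integral_dominated_convergence_at_top[where w="\<lambda>y. \<bar>h y\<bar>"])
    show "AE y in lborel. ((\<lambda>t. indicator {..-t} y *\<^sub>R h y) \<longlongrightarrow> 0 * h y) at_top"
    proof (rule AE_I2)
      fix y :: real
      have "\<forall>\<^sub>F t in at_top. indicator {..-t} y *\<^sub>R h y = 0"
        using eventually_gt_at_top[of "-y"] by eventually_elim (auto simp: indicator_def)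
      then show "((\<lambda>t. indicator {..-t} y *\<^sub>R h y) \<longlongrightarrow> 0 * h y) at_top"
        by (simp add: tendsto_eventually)
    qed
    show "\<forall>\<^sub>F t in at_top. AE y in lborel. norm (indicator {..-t} y *\<^sub>R h y) \<le> \<bar>h y\<bar>"
      by (auto simp: indicator_def)
  qed (use h in auto)
  then show "((\<lambda>x. LINT y|lborel. indicator {..-x} y *\<^sub>R h y) \<longlongrightarrow> 0) at_top" by simp
qed

lemma prim_measurable:
  assumes [measurable]: "u \<in> borel_measurable borel"
  shows "prim u \<in> borel_measurable borel"
proof -
  have [measurable]: "Measurable.pred (borel \<Otimes>\<^sub>M borel) (\<lambda>p::real \<times> real. snd p \<in> {..fst p})"
    by simp
  show ?thesis unfolding prim_def[abs_def] set_lebesgue_integral_def by measurable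
qed

lemma prim_abs_bound:
  fixes u :: "real \<Rightarrow> real"
  assumes u: "integrable lborel u" and xy: "x \<le> y"
  shows "\<bar>prim u y - prim u x\<bar> \<le> prim (\<lambda>t. \<bar>u t\<bar>) y - prim (\<lambda>t. \<bar>u t\<bar>) x"
proof -
  have au: "integrable lborel (\<lambda>t. \<bar>u t\<bar>)" using u by auto
  have "\<bar>integral {x..y} u\<bar> \<le> integral {x..y} (\<lambda>t. \<bar>u t\<bar>)"
    using integral_norm_bound_integral[OF set_integral_eq_HK_integral(1)[OF u]
        set_integral_eq_HK_integral(1)[OF au], of "{x..y}"] by simp
  then show ?thesis using prim_diff[OF u xy] prim_diff[OF au xy] by simp
qed

lemma prim_range:
  fixes u :: "real \<Rightarrow> real"
  assumes u: "integrable lborel u" and nn: "\<And>y. u y \<ge> 0"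
  shows "0 \<le> prim u x" "prim u x \<le> (LINT t|lborel. u t)"
  unfolding prim_def set_lebesgue_integral_def
  using u integrable_imp_set_integrable[OF u, of "{..x}"] nn
  by (auto intro!: Bochner_Integration.integral_nonneg integral_mono
           simp: set_integrable_def indicator_def)

lemma lborel_integral_shift:
  fixes f :: "real \<Rightarrow> real"
  shows "(LINT y|lborel. f (y + c)) = (LINT y|lborel. f y)"
  using lborel_integral_real_affine[of 1 f c] by (simp add: add.commute)

lemma lborel_integrable_shift:
  fixes f :: "real \<Rightarrow> real"
  assumes "integrable lborel f"
  shows "integrable lborel (\<lambda>y. f (y + c))"
  using lborel_integrable_real_affine[OF assms, of 1 c] by (simp add: add.commute)

text \<open>An increment of the primitive, written as an integral over a fixed window; this is the
  form in which Fubini's theorem applies to Steklov averages.\<close>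

lemma prim_increment:
  fixes u :: "real \<Rightarrow> real"
  assumes u: "integrable lborel u" and xy: "x \<le> y"
  shows "prim u y - prim u x = (LINT t|lborel. indicator {0..y-x} t * u (t + x))"
proof -
  have "prim u y - prim u x = (LINT t|lborel. indicator {x..y} t * u t)"
    using prim_diff[OF u xy] set_integral_eq_HK_integral(2)[OF u, of "{x..y}"]
    unfolding set_lebesgue_integral_def by simp
  also have "\<dots> = (LINT t|lborel. indicator {x..y} (t + x) * u (t + x))"
    using lborel_integral_shift[of "\<lambda>t. indicator {x..y} t * u t" x] by simp
  also have "\<dots> = (LINT t|lborel. indicator {0..y-x} t * u (t + x))"
    by (rule Bochner_Integration.integral_cong) (auto simp: indicator_def)
  finally show ?thesis .
qed

lemma prim_difference_quotient:
  fixes g :: "real \<Rightarrow> real"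
  assumes g: "integrable lborel g"
  shows "prim (\<lambda>y. (g (y + d) - g y) / d) x = (prim g (x + d) - prim g x) / d"
proof -
  have i1: "integrable lborel (\<lambda>y. indicator {..x} y * g (y + d))"
    using integrable_real_mult_indicator[OF _ lborel_integrable_shift[OF g, of d], of "{..x}"]
    by (simp add: mult.commute)
  have i2: "integrable lborel (\<lambda>y. indicator {..x} y * g y)"
    using integrable_real_mult_indicator[OF _ g, of "{..x}"] by (simp add: mult.commute)
  have "prim (\<lambda>y. (g (y + d) - g y) / d) x
      = (LINT y|lborel. (indicator {..x} y * g (y + d) - indicator {..x} y * g y) / d)"
    unfolding prim_def set_lebesgue_integral_def
    by (rule Bochner_Integration.integral_cong) (auto simp: algebra_simps diff_divide_distrib)
  also have "\<dots> = ((LINT y|lborel. indicator {..x} y * g (y + d))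
                   - (LINT y|lborel. indicator {..x} y * g y)) / d"
    using i1 i2 by simp
  also have "(LINT y|lborel. indicator {..x} y * g (y + d))
           = (LINT y|lborel. indicator {..x+d} (y + d) * g (y + d))"
    by (rule Bochner_Integration.integral_cong) (auto simp: indicator_def)
  also have "\<dots> = (LINT y|lborel. indicator {..x+d} y * g y)"
    by (rule lborel_integral_shift)
  finally show ?thesis unfolding prim_def set_lebesgue_integral_def by simp
qed

section \<open>Stieltjes integrals against a primitive\<close>

lemma integrable_bounded_continuous_mult:
  fixes P h :: "real \<Rightarrow> real"
  assumes P: "continuous_on UNIV P" "\<And>y. \<bar>P y\<bar> \<le> B" and h: "integrable lborel h"
  shows "integrable lborel (\<lambda>y. P y * h y)"
proof (rule Bochner_Integration.integrable_bound[OF integrable_mult_right[OF integrable_abs[OF h], of B]])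
  show "(\<lambda>y. P y * h y) \<in> borel_measurable lborel"
    using borel_measurable_continuous_onI[OF P(1)] h by (intro borel_measurable_times) auto
  have "0 \<le> B" using P(2)[of 0] by linarith
  then show "AE x in lborel. norm (P x * h x) \<le> norm (B * \<bar>h x\<bar>)"
    using P(2) by (intro AE_I2) (simp add: abs_mult mult_right_mono)
qed

lemma prim_Stieltjes_cell_estimate:
  fixes P h :: "real \<Rightarrow> real"
  assumes h: "integrable lborel h" and Ph: "integrable lborel (\<lambda>y. P y * h y)" and uv: "u \<le> v"
    and osc: "\<And>y. y \<in> {u..v} \<Longrightarrow> \<bar>P x - P y\<bar> \<le> \<epsilon>"
  shows "\<bar>P x * (prim h v - prim h u) - integral {u..v} (\<lambda>y. P y * h y)\<bar>
         \<le> \<epsilon> * integral {u..v} (\<lambda>y. \<bar>h y\<bar>)"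
proof -
  have ah: "integrable lborel (\<lambda>y. \<bar>h y\<bar>)" using h by auto
  have i1: "(\<lambda>y. P x * h y) integrable_on {u..v}" and i2: "(\<lambda>y. P y * h y) integrable_on {u..v}"
    and i3: "(\<lambda>y. \<epsilon> * \<bar>h y\<bar>) integrable_on {u..v}"
    using set_integral_eq_HK_integral(1)[OF integrable_mult_right[OF h]]
      set_integral_eq_HK_integral(1)[OF Ph]
      set_integral_eq_HK_integral(1)[OF integrable_mult_right[OF ah]] by auto
  have "P x * (prim h v - prim h u) - integral {u..v} (\<lambda>y. P y * h y)
        = integral {u..v} (\<lambda>y. (P x - P y) * h y)"
    using prim_diff[OF h uv] integral_diff[OF i1 i2] by (simp add: algebra_simps)
  also have "\<bar>\<dots>\<bar> \<le> integral {u..v} (\<lambda>y. \<epsilon> * \<bar>h y\<bar>)"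
  proof -
    have "(\<lambda>y. (P x - P y) * h y) integrable_on {u..v}"
      using integrable_diff[OF i1 i2] by (simp add: algebra_simps)
    moreover have "norm ((P x - P y) * h y) \<le> \<epsilon> * \<bar>h y\<bar>" if "y \<in> {u..v}" for y
      using osc[OF that] by (simp add: abs_mult mult_right_mono)
    ultimately show ?thesis using integral_norm_bound_integral[OF _ i3] by force
  qed
  finally show ?thesis by simp
qed

text \<open>Summing the cell estimates over a fine division, uniform continuity of \<open>P\<close> on
  \<open>[a,b]\<close> makes the Riemann--Stieltjes sums converge to \<open>\<integral>\<^sub>a\<^sup>b P h\<close>.\<close>

lemma has_HS_integral_on_prim:
  fixes P h :: "real \<Rightarrow> real"
  assumes P: "continuous_on UNIV P" "\<And>y. \<bar>P y\<bar> \<le> B" and h: "integrable lborel h"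
  shows "has_HS_integral_on P (prim h) a b (integral {a..b} (\<lambda>y. P y * h y))"
  unfolding has_HS_integral_on_def
proof (intro allI impI)
  fix e :: real assume e: "e > 0"
  have ah: "integrable lborel (\<lambda>y. \<bar>h y\<bar>)" using h by auto
  have Ph: "integrable lborel (\<lambda>y. P y * h y)" by (rule integrable_bounded_continuous_mult[OF P h])
  define M where "M = integral {a..b} (\<lambda>y. \<bar>h y\<bar>)"
  have M0: "M \<ge> 0" unfolding M_def
    by (rule integral_nonneg) (use set_integral_eq_HK_integral(1)[OF ah] in auto)
  define \<epsilon> where "\<epsilon> = e / (M + 1)"
  have \<epsilon>: "\<epsilon> > 0" using e M0 by (simp add: \<epsilon>_def)
  have "uniformly_continuous_on {a..b} P"
    by (rule compact_uniformly_continuous) (use P(1) continuous_on_subset in auto)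
  then obtain d where d: "d > 0"
    "\<And>x y. x \<in> {a..b} \<Longrightarrow> y \<in> {a..b} \<Longrightarrow> dist y x < d \<Longrightarrow> dist (P y) (P x) < \<epsilon>"
    unfolding uniformly_continuous_on_def using \<epsilon> by metis
  show "\<exists>\<gamma>. gauge \<gamma> \<and> (\<forall>D. D tagged_division_of {a..b} \<and> \<gamma> fine D \<longrightarrow>
        \<bar>(\<Sum>(x,K)\<in>D. P x * (prim h (Sup K) - prim h (Inf K))) - integral {a..b} (\<lambda>y. P y * h y)\<bar> < e)"
  proof (intro exI conjI allI impI)
    show "gauge (\<lambda>x. ball x d)" using d(1) by (rule gauge_ball)
    fix D assume D: "D tagged_division_of {a..b} \<and> (\<lambda>x. ball x d) fine D"
    have cell: "\<bar>P x * (prim h (Sup K) - prim h (Inf K)) - integral K (\<lambda>y. P y * h y)\<bar>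
                \<le> \<epsilon> * integral K (\<lambda>y. \<bar>h y\<bar>)" if xK: "(x,K) \<in> D" for x K
    proof -
      obtain u v where Kuv: "K = {u..v}" and uv: "u \<le> v" and xinK: "x \<in> K"
        using D xK by (metis box_real(2) tagged_division_ofD(2,4) atLeastAtMost_iff order_trans)
      have Ksub: "K \<subseteq> {a..b}" and Kball: "K \<subseteq> ball x d"
        using D xK unfolding fine_def by blast+
      have "\<bar>P x - P y\<bar> \<le> \<epsilon>" if "y \<in> {u..v}" for y
      proof -
        have "dist y x < d" "x \<in> {a..b}" "y \<in> {a..b}"
          using that Kuv Kball Ksub xinK by (auto simp: dist_commute)
        then have "\<bar>P y - P x\<bar> < \<epsilon>" using d(2) by (simp add: dist_real_def)
        then show ?thesis by simp
      qed
      then show ?thesis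
        using prim_Stieltjes_cell_estimate[OF h Ph uv] Kuv uv by simp
    qed
    have D': "D tagged_division_of cbox a b" using D by simp
    have "(\<lambda>y. P y * h y) integrable_on cbox a b" "(\<lambda>y. \<bar>h y\<bar>) integrable_on cbox a b"
      using set_integral_eq_HK_integral(1)[OF Ph] set_integral_eq_HK_integral(1)[OF ah] by auto
    then have "integral {a..b} (\<lambda>y. P y * h y) = (\<Sum>(x,K)\<in>D. integral K (\<lambda>y. P y * h y))"
      and M_sum: "M = (\<Sum>(x,K)\<in>D. integral K (\<lambda>y. \<bar>h y\<bar>))"
      using integral_combine_tagged_division_topdown[OF _ D'] unfolding M_def by simp_all
    then have "\<bar>(\<Sum>(x,K)\<in>D. P x * (prim h (Sup K) - prim h (Inf K))) - integral {a..b} (\<lambda>y. P y * h y)\<bar>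
        = \<bar>\<Sum>(x,K)\<in>D. P x * (prim h (Sup K) - prim h (Inf K)) - integral K (\<lambda>y. P y * h y)\<bar>"
      by (simp add: sum_subtractf case_prod_unfold)
    also have "\<dots> \<le> (\<Sum>(x,K)\<in>D. \<epsilon> * integral K (\<lambda>y. \<bar>h y\<bar>))"
      by (rule order_trans[OF sum_abs sum_mono]) (auto simp: cell)
    also have "\<dots> = \<epsilon> * M" unfolding M_sum by (simp add: sum_distrib_left case_prod_unfold)
    also have "\<dots> < e" using e M0 by (simp add: \<epsilon>_def field_simps)
    finally show "\<bar>(\<Sum>(x,K)\<in>D. P x * (prim h (Sup K) - prim h (Inf K)))
                   - integral {a..b} (\<lambda>y. P y * h y)\<bar> < e" .
  qed
qed

lemma has_HS_integral_prim:
  fixes P h :: "real \<Rightarrow> real"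
  assumes P: "continuous_on UNIV P" "\<And>y. \<bar>P y\<bar> \<le> B" and h: "integrable lborel h"
  shows "has_HS_integral P (prim h) (LINT y|lborel. P y * h y)"
  unfolding has_HS_integral_def
proof (intro exI conjI allI impI)
  show "has_HS_integral_on P (prim h) a b (integral {a..b} (\<lambda>y. P y * h y))" for a b
    by (rule has_HS_integral_on_prim[OF P h])
  define q where "q = (\<lambda>y. P y * h y)"
  have q: "integrable lborel q" unfolding q_def by (rule integrable_bounded_continuous_mult[OF P h])
  have "((\<lambda>p. prim q (snd p) - prim q (fst p)) \<longlongrightarrow> (LINT y|lborel. q y) - 0) (at_bot \<times>\<^sub>F at_top)"
    by (intro tendsto_diff filterlim_compose[OF prim_at_top[OF q] filterlim_snd]
        filterlim_compose[OF prim_at_bot[OF q] filterlim_fst])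
  moreover have "\<forall>\<^sub>F p in at_bot \<times>\<^sub>F at_top. fst p \<le> (0::real) \<and> (0::real) \<le> snd p"
    using eventually_prodI[OF eventually_le_at_bot[of "0::real"] eventually_ge_at_top[of "0::real"]]
    by simp
  then have "\<forall>\<^sub>F p in at_bot \<times>\<^sub>F at_top.
               prim q (snd p) - prim q (fst p) = (\<lambda>(a,b). integral {a..b} q) p"
    by eventually_elim (use prim_diff[OF q] in \<open>auto simp: case_prod_beta\<close>)
  ultimately show "((\<lambda>(a,b). integral {a..b} (\<lambda>y. P y * h y)) \<longlongrightarrow> (LINT y|lborel. P y * h y))
                     (at_bot \<times>\<^sub>F at_top)"
    unfolding q_def by (simp add: tendsto_cong)
qed

lemma BC_continuous: "BC F \<Longrightarrow> continuous_on UNIV F"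
  unfolding BC_def by blast

text \<open>A primitive in \<open>B\<^sub>C\<close> is bounded: it is continuous with finite limits at both ends.\<close>

lemma BC_bounded:
  assumes F: "BC F"
  obtains B where "\<And>x. \<bar>F x\<bar> \<le> B"
proof -
  from F obtain L where cF: "continuous_on UNIV F" and Fb: "(F \<longlongrightarrow> 0) at_bot"
    and Ft: "(F \<longlongrightarrow> L) at_top"
    unfolding BC_def by blast
  obtain M1 where M1: "\<And>x. x \<ge> M1 \<Longrightarrow> dist (F x) L < 1"
    using tendstoD[OF Ft, of 1] by (auto simp: eventually_at_top_linorder)
  obtain M2 where M2: "\<And>x. x \<le> M2 \<Longrightarrow> dist (F x) 0 < 1"
    using tendstoD[OF Fb, of 1] by (auto simp: eventually_at_bot_linorder)
  have "compact (F ` {M2..M1})"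
    by (rule compact_continuous_image[OF continuous_on_subset[OF cF]]) auto
  then obtain C where C: "\<And>y. y \<in> F ` {M2..M1} \<Longrightarrow> norm y \<le> C"
    using compact_imp_bounded bounded_iff by metis
  show ?thesis
  proof (rule that)
    fix x
    consider "x \<ge> M1" | "x \<le> M2" | "x \<in> {M2..M1}" by fastforce
    then show "\<bar>F x\<bar> \<le> max C (\<bar>L\<bar> + 1)"
      using M1[of x] M2[of x] C[of "F x"] by cases (auto simp: dist_real_def)
  qed
qed

lemma conv_BV_prim:
  fixes F h :: "real \<Rightarrow> real"
  assumes F: "BC F" and h: "integrable lborel h"
  shows "conv_BV F (prim h) x = conv_L F h x"
proof -
  from F obtain L where Ft: "(F \<longlongrightarrow> L) at_top" unfolding BC_def by blast
  obtain B where B: "\<And>x. \<bar>F x\<bar> \<le> B" using BC_bounded[OF F] by blast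
  have vt: "val_top F = L" unfolding val_top_def by (rule tendsto_Lim[OF _ Ft]) simp
  have lim_prim: "Lim at_top (prim h) = (LINT y|lborel. h y)"
    by (rule tendsto_Lim[OF _ prim_at_top[OF h]]) simp
  have cFx: "continuous_on UNIV (\<lambda>y. F (x - y))"
    by (intro continuous_intros continuous_on_compose2[OF BC_continuous[OF F]]) auto
  have "continuous_on UNIV (\<lambda>y. L - F (x - y))" by (intro continuous_intros cFx)
  moreover have "\<bar>L - F (x - y)\<bar> \<le> \<bar>L\<bar> + B" for y using B[of "x-y"] by linarith
  ultimately have "HS_integral (\<lambda>y. L - F (x - y)) (prim h) = (LINT y|lborel. (L - F (x - y)) * h y)"
    by (intro HS_integral_eqI has_HS_integral_prim h)
  also have "\<dots> = L * (LINT y|lborel. h y) - (LINT y|lborel. F (x - y) * h y)"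
    using h integrable_bounded_continuous_mult[OF cFx B h] by (simp add: algebra_simps)
  finally show ?thesis unfolding conv_BV_def conv_L_def vt lim_prim by simp
qed

section \<open>The Lebesgue convolution \<open>F * g\<close>\<close>

lemma conv_L_integrable:
  assumes F: "BC F" and g: "integrable lborel g"
  shows "integrable lborel (\<lambda>y. F (x - y) * g y)"
proof -
  obtain B where B: "\<And>x. \<bar>F x\<bar> \<le> B" using BC_bounded[OF F] by blast
  have cFx: "continuous_on UNIV (\<lambda>y. F (x - y))"
    by (intro continuous_intros continuous_on_compose2[OF BC_continuous[OF F]]) auto
  show ?thesis by (rule integrable_bounded_continuous_mult[OF cFx B g])
qed

lemma conv_L_shift: "conv_L F (\<lambda>y. g (y + c)) x = conv_L F g (x + c)"
  unfolding conv_L_def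
  using lborel_integral_shift[of "\<lambda>z. F (x + c - z) * g z" c] by (simp add: algebra_simps)

text \<open>Continuity and the limits at \<open>\<plusminus>\<infinity>\<close> all follow by dominated convergence with
  dominating function \<open>B \<bar>g\<bar>\<close>, where \<open>B\<close> bounds \<open>F\<close>.\<close>

lemma conv_L_continuous:
  assumes F: "BC F" and g: "integrable lborel g"
  shows "isCont (conv_L F g) a"
  unfolding continuous_at_sequentially comp_def
proof (intro allI impI)
  obtain B where B: "\<And>x. \<bar>F x\<bar> \<le> B" using BC_bounded[OF F] by blast
  fix X :: "nat \<Rightarrow> real" assume X: "X \<longlonglongrightarrow> a"
  show "(\<lambda>n. conv_L F g (X n)) \<longlonglongrightarrow> conv_L F g a"
    unfolding conv_L_def
  proof (rule integral_dominated_convergence[where w="\<lambda>y. B * \<bar>g y\<bar>"])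
    show "AE y in lborel. (\<lambda>i. F (X i - y) * g y) \<longlonglongrightarrow> F (a - y) * g y"
    proof (rule AE_I2)
      fix y :: real
      have "(\<lambda>i. X i - y) \<longlonglongrightarrow> a - y" by (intro tendsto_intros X)
      then have "(\<lambda>i. F (X i - y)) \<longlonglongrightarrow> F (a - y)"
        using continuous_on_tendsto_compose[OF BC_continuous[OF F]] by simp
      then show "(\<lambda>i. F (X i - y) * g y) \<longlonglongrightarrow> F (a - y) * g y" by (intro tendsto_intros)
    qed
    show "AE y in lborel. norm (F (X i - y) * g y) \<le> B * \<bar>g y\<bar>" for i
      using B by (intro AE_I2) (simp add: abs_mult mult_right_mono)
  qed (use g conv_L_integrable[OF F g] in auto)
qed

lemma conv_L_at_top:
  assumes F: "BC F" and g: "integrable lborel g" and L: "(F \<longlongrightarrow> L) at_top"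
  shows "(conv_L F g \<longlongrightarrow> L * (LINT y|lborel. g y)) at_top"
proof -
  obtain B where B: "\<And>x. \<bar>F x\<bar> \<le> B" using BC_bounded[OF F] by blast
  have "((\<lambda>t. LINT y|lborel. F (t - y) * g y) \<longlongrightarrow> (LINT y|lborel. L * g y)) at_top"
  proof (rule integral_dominated_convergence_at_top[where w="\<lambda>y. B * \<bar>g y\<bar>"])
    show "AE y in lborel. ((\<lambda>t. F (t - y) * g y) \<longlongrightarrow> L * g y) at_top"
    proof (rule AE_I2)
      fix y :: real
      have "filterlim (\<lambda>t. t - y) at_top at_top"
        by (rule filterlim_tendsto_add_at_top[of "\<lambda>_. -y", simplified]) (auto intro: filterlim_ident)
      then have "((\<lambda>t. F (t - y)) \<longlongrightarrow> L) at_top" by (rule filterlim_compose[OF L])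
      then show "((\<lambda>t. F (t - y) * g y) \<longlongrightarrow> L * g y) at_top" by (intro tendsto_intros)
    qed
    show "\<forall>\<^sub>F t in at_top. AE y in lborel. norm (F (t - y) * g y) \<le> B * \<bar>g y\<bar>"
      using B by (intro always_eventually allI AE_I2) (simp add: abs_mult mult_right_mono)
  qed (use g conv_L_integrable[OF F g] in auto)
  then show ?thesis unfolding conv_L_def[abs_def] using g by simp
qed

lemma conv_L_at_bot:
  assumes F: "BC F" and g: "integrable lborel g"
  shows "(conv_L F g \<longlongrightarrow> 0) at_bot"
proof -
  obtain B where B: "\<And>x. \<bar>F x\<bar> \<le> B" using BC_bounded[OF F] by blast
  have F0: "(F \<longlongrightarrow> 0) at_bot" using F unfolding BC_def by blast
  have "((\<lambda>t. LINT y|lborel. F (- t - y) * g y) \<longlongrightarrow> (LINT y|lborel. 0 * g y)) at_top"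
  proof (rule integral_dominated_convergence_at_top[where w="\<lambda>y. B * \<bar>g y\<bar>"])
    show "AE y in lborel. ((\<lambda>t. F (- t - y) * g y) \<longlongrightarrow> 0 * g y) at_top"
    proof (rule AE_I2)
      fix y :: real
      have "filterlim (\<lambda>t::real. y + t) at_top at_top"
        by (rule filterlim_tendsto_add_at_top[OF tendsto_const filterlim_ident])
      then have "filterlim (\<lambda>t. - t - y) at_bot at_top"
        unfolding filterlim_uminus_at_bot by (simp add: add.commute)
      then have "((\<lambda>t. F (- t - y)) \<longlongrightarrow> 0) at_top" by (rule filterlim_compose[OF F0])
      then show "((\<lambda>t. F (- t - y) * g y) \<longlongrightarrow> 0 * g y) at_top" by (intro tendsto_intros)
    qed
    show "\<forall>\<^sub>F t in at_top. AE y in lborel. norm (F (- t - y) * g y) \<le> B * \<bar>g y\<bar>"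
      using B by (intro always_eventually allI AE_I2) (simp add: abs_mult mult_right_mono)
  qed (use g conv_L_integrable[OF F g] in auto)
  then show ?thesis unfolding conv_L_def[abs_def] filterlim_at_bot_mirror by simp
qed

section \<open>Steklov averages\<close>

definition steklov :: "(real \<Rightarrow> real) \<Rightarrow> real \<Rightarrow> real \<Rightarrow> real" where
  "steklov u d x = (prim u (x + d) - prim u x) / d"

lemma steklov_measurable:
  assumes u: "integrable lborel u"
  shows "steklov u d \<in> borel_measurable borel"
proof -
  have [measurable]: "prim u \<in> borel_measurable borel"
    using prim_measurable u by simp
  show ?thesis unfolding steklov_def[abs_def] by measurable
qed

lemma steklov_abs_bound:
  assumes u: "integrable lborel u" and d: "d > 0"
  shows "\<bar>steklov u d x\<bar> \<le> steklov (\<lambda>t. \<bar>u t\<bar>) d x"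
  using prim_abs_bound[OF u, of x "x + d"] d
  unfolding steklov_def by (simp add: abs_divide divide_right_mono)

lemma steklov_nn_integral:
  fixes u :: "real \<Rightarrow> real"
  assumes u: "integrable lborel u" and nn: "\<And>y. u y \<ge> 0" and d: "d > 0"
  shows "(\<integral>\<^sup>+x. ennreal (steklov u d x) \<partial>lborel) = (\<integral>\<^sup>+x. ennreal (u x) \<partial>lborel)"
proof -
  have [measurable]: "u \<in> borel_measurable borel" "steklov u d \<in> borel_measurable borel"
    using u steklov_measurable[OF u] by simp_all
  have window: "(\<integral>\<^sup>+t. ennreal (indicator {0..d} t * u (t + x)) \<partial>lborel) = ennreal (d * steklov u d x)"
    for x
  proof -
    have "integrable lborel (\<lambda>t. u (t + x) * indicator {0..d} t)"
      by (rule integrable_real_mult_indicator[OF _ lborel_integrable_shift[OF u]]) simp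
    then have "(\<integral>\<^sup>+t. ennreal (indicator {0..d} t * u (t + x)) \<partial>lborel)
               = ennreal (LINT t|lborel. indicator {0..d} t * u (t + x))"
      by (intro nn_integral_eq_integral) (use nn in \<open>auto simp: indicator_def mult.commute\<close>)
    then show ?thesis using prim_increment[OF u, of x "x + d"] d by (simp add: steklov_def)
  qed
  have "ennreal d * (\<integral>\<^sup>+x. ennreal (steklov u d x) \<partial>lborel) = (\<integral>\<^sup>+x. ennreal (d * steklov u d x) \<partial>lborel)"
    using d by (subst nn_integral_cmult[symmetric]) (auto simp: ennreal_mult')
  also have "\<dots> = (\<integral>\<^sup>+x. (\<integral>\<^sup>+t. ennreal (indicator {0..d} t * u (t + x)) \<partial>lborel) \<partial>lborel)"
    by (simp add: window)
  also have "\<dots> = (\<integral>\<^sup>+t. (\<integral>\<^sup>+x. ennreal (indicator {0..d} t * u (t + x)) \<partial>lborel) \<partial>lborel)"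
    by (rule lborel_pair.Fubini'[symmetric]) measurable
  also have "\<dots> = (\<integral>\<^sup>+t. ennreal (indicator {0..d} t) * (\<integral>\<^sup>+x. ennreal (u (t + x)) \<partial>lborel) \<partial>lborel)"
    by (subst nn_integral_cmult[symmetric]) (auto intro!: nn_integral_cong simp: ennreal_mult')
  also have "\<dots> = (\<integral>\<^sup>+t. ennreal (indicator {0..d} t) * (\<integral>\<^sup>+x. ennreal (u x) \<partial>lborel) \<partial>lborel)"
    using nn_integral_real_affine[of "\<lambda>x. ennreal (u x)" 1] by simp
  also have "\<dots> = ennreal d * (\<integral>\<^sup>+x. ennreal (u x) \<partial>lborel)"
    using d by (subst nn_integral_multc) (auto simp: ennreal_indicator)
  finally show ?thesis
    using d ennreal_mult_cancel_left[of "ennreal d"] by auto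
qed

text \<open>Since \<open>\<bar>u\<^sub>d\<bar> \<le> \<bar>u\<bar>\<^sub>d\<close>, averaging does not increase the \<open>L\<^sup>1\<close> norm.\<close>

lemma steklov_nn_norm_bound:
  assumes u: "integrable lborel u" and d: "d > 0"
  shows "(\<integral>\<^sup>+x. norm (steklov u d x) \<partial>lborel) \<le> (\<integral>\<^sup>+x. norm (u x) \<partial>lborel)"
proof -
  have au: "integrable lborel (\<lambda>t. \<bar>u t\<bar>)" using u by auto
  have "(\<integral>\<^sup>+x. norm (steklov u d x) \<partial>lborel) \<le> (\<integral>\<^sup>+x. ennreal (steklov (\<lambda>t. \<bar>u t\<bar>) d x) \<partial>lborel)"
    using steklov_abs_bound[OF u d] by (intro nn_integral_mono) (simp add: ennreal_leI)
  also have "\<dots> = (\<integral>\<^sup>+x. norm (u x) \<partial>lborel)"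
    using steklov_nn_integral[OF au _ d] by simp
  finally show ?thesis .
qed

lemma steklov_integrable:
  assumes u: "integrable lborel u" and d: "d > 0"
  shows "integrable lborel (steklov u d)"
  using u steklov_nn_norm_bound[OF u d] steklov_measurable[OF u]
  unfolding integrable_iff_bounded by (auto intro: le_less_trans)

lemma steklov_AE_convergence:
  fixes u :: "real \<Rightarrow> real"
  assumes u: "integrable lborel u"
  shows "AE x in lborel. (\<lambda>n. steklov u (1 / Suc n) x) \<longlonglongrightarrow> u x"
proof -
  obtain N where N: "negligible N"
    "\<And>x e. \<lbrakk>x \<notin> N; 0 < e\<rbrakk> \<Longrightarrow> \<exists>d>0. \<forall>h. 0 < h \<and> h < d \<longrightarrow>
        norm (integral (cbox x (x + h *\<^sub>R One)) u /\<^sub>R h ^ DIM(real) - u x) < e"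
    using integrable_ccontinuous_explicit[of u] set_integral_eq_HK_integral(1)[OF u] by auto
  have conv: "(\<lambda>n. steklov u (1 / Suc n) x) \<longlonglongrightarrow> u x" if xN: "x \<notin> N" for x
  proof (rule LIMSEQ_I)
    fix e :: real assume e: "e > 0"
    obtain d where d: "d > 0" "\<And>h. 0 < h \<and> h < d \<Longrightarrow>
        norm (integral (cbox x (x + h *\<^sub>R One)) u /\<^sub>R h ^ DIM(real) - u x) < e"
      using N(2)[OF xN e] by blast
    obtain M :: nat where M: "1 / d < M" using reals_Archimedean2 by blast
    show "\<exists>no. \<forall>n\<ge>no. norm (steklov u (1 / Suc n) x - u x) < e"
    proof (intro exI allI impI)
      fix n assume n: "n \<ge> M"
      define h where "h = 1 / real (Suc n)"
      have h0: "h > 0" unfolding h_def by simp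
      have "1 / d < Suc n" using M n by linarith
      then have "h < d" unfolding h_def using d(1) by (simp add: field_simps)
      then show "norm (steklov u (1 / Suc n) x - u x) < e"
        using d(2)[of h] h0 prim_diff[OF u, of x "x + h"]
        unfolding h_def steklov_def by (simp add: divide_inverse mult.commute)
    qed
  qed
  have "AE x in lebesgue. x \<notin> N"
    using N(1) unfolding negligible_iff_null_sets by (rule AE_not_in)
  then have "AE x in completion lborel. (\<lambda>n. steklov u (1 / Suc n) x) \<longlonglongrightarrow> u x"
    by eventually_elim (rule conv)
  then show ?thesis by (simp add: AE_completion_iff)
qed

text \<open>Pointwise a.e. convergence together with the norm bound gives \<open>L\<^sup>1\<close> convergence
  (Scheffe's lemma).\<close>

lemma steklov_L1_convergence:
  fixes g :: "real \<Rightarrow> real"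
  assumes g: "integrable lborel g"
  shows "(\<lambda>n. LINT x|lborel. \<bar>steklov g (1 / Suc n) x - g x\<bar>) \<longlonglongrightarrow> 0"
proof -
  have "(\<lambda>n. \<integral>\<^sup>+x. norm (steklov g (1 / Suc n) x - g x) \<partial>lborel) \<longlonglongrightarrow> 0"
    using steklov_measurable[OF g] steklov_AE_convergence[OF g] steklov_nn_norm_bound[OF g]
    by (intro Scheffe_lemma2 g) auto
  then have "(\<lambda>n. enn2real (\<integral>\<^sup>+x. ennreal \<bar>steklov g (1 / Suc n) x - g x\<bar> \<partial>lborel)) \<longlonglongrightarrow> 0"
    by (intro tendsto_enn2real) auto
  moreover have "(LINT x|lborel. \<bar>steklov g (1 / Suc n) x - g x\<bar>)
      = enn2real (\<integral>\<^sup>+x. ennreal \<bar>steklov g (1 / Suc n) x - g x\<bar> \<partial>lborel)" for n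
    using steklov_measurable[OF g] g by (intro integral_eq_nn_integral) auto
  ultimately show ?thesis by simp
qed

lemma BV_if_dominated_increments:
  fixes f A :: "real \<Rightarrow> real"
  assumes dom: "\<And>x y. x \<le> y \<Longrightarrow> \<bar>f y - f x\<bar> \<le> A y - A x"
    and rng: "\<And>x. 0 \<le> A x" "\<And>x. A x \<le> C"
  shows "BV f"
  unfolding BV_def
proof (intro exI allI impI)
  fix xs :: "real list" assume s: "sorted xs"
  have "(\<Sum>i<length xs - 1. \<bar>f (xs ! Suc i) - f (xs ! i)\<bar>)
        \<le> (\<Sum>i<length xs - 1. A (xs ! Suc i) - A (xs ! i))"
    using s by (intro sum_mono dom) (auto simp: sorted_iff_nth_mono)
  also have "\<dots> = A (xs ! (length xs - 1)) - A (xs ! 0)"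
    by (rule sum_lessThan_telescope)
  also have "\<dots> \<le> C" using rng[of "xs ! (length xs - 1)"] rng(1)[of "xs ! 0"] by linarith
  finally show "(\<Sum>i<length xs - 1. \<bar>f (xs ! Suc i) - f (xs ! i)\<bar>) \<le> C" .
qed

text \<open>\<open>u\<^sub>d\<close> has variation at most \<open>2 \<parallel>u\<parallel>\<^sub>1 / d\<close>.\<close>

lemma steklov_BV:
  fixes g :: "real \<Rightarrow> real"
  assumes g: "integrable lborel g" and d: "d > 0"
  shows "BV (steklov g d)"
proof -
  define A where "A = prim (\<lambda>y. \<bar>g y\<bar>)"
  have ag: "integrable lborel (\<lambda>y. \<bar>g y\<bar>)" using g by auto
  have Ab: "\<bar>prim g y - prim g x\<bar> \<le> A y - A x" if "x \<le> y" for x y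
    unfolding A_def by (rule prim_abs_bound[OF g that])
  have Ar: "0 \<le> A x" "A x \<le> (LINT t|lborel. \<bar>g t\<bar>)" for x
    unfolding A_def using prim_range[OF ag] by auto
  show ?thesis
  proof (rule BV_if_dominated_increments[where A="\<lambda>x. (A (x + d) + A x) / d"
        and C="2 * (LINT t|lborel. \<bar>g t\<bar>) / d"])
    fix x y :: real assume xy: "x \<le> y"
    have "\<bar>steklov g d y - steklov g d x\<bar>
          = \<bar>(prim g (y + d) - prim g (x + d)) - (prim g y - prim g x)\<bar> / d"
      unfolding steklov_def using d by (simp add: abs_divide diff_divide_distrib[symmetric] algebra_simps)
    also have "\<dots> \<le> ((A (y + d) - A (x + d)) + (A y - A x)) / d"
      using Ab[OF xy] Ab[of "x + d" "y + d"] xy d by (intro divide_right_mono) auto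
    finally show "\<bar>steklov g d y - steklov g d x\<bar> \<le> (A (y + d) + A y) / d - (A (x + d) + A x) / d"
      by (simp add: diff_divide_distrib[symmetric] algebra_simps)
  next
    fix x
    show "0 \<le> (A (x + d) + A x) / d" using Ar d by simp
    show "(A (x + d) + A x) / d \<le> 2 * (LINT t|lborel. \<bar>g t\<bar>) / d"
      using Ar[of x] Ar[of "x + d"] d by (intro divide_right_mono) auto
  qed
qed

lemma conv_BV_steklov:
  assumes F: "BC F" and g: "integrable lborel g"
  shows "conv_BV F (steklov g d) x = (conv_L F g (x + d) - conv_L F g x) / d"
proof -
  define q where "q = (\<lambda>y. (g (y + d) - g y) / d)"
  have q: "integrable lborel q" unfolding q_def using lborel_integrable_shift[OF g] g by auto
  have "steklov g d = prim q"
    unfolding q_def steklov_def[abs_def] prim_difference_quotient[OF g] ..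
  then have "conv_BV F (steklov g d) x = conv_L F q x" using conv_BV_prim[OF F q] by simp
  also have "\<dots> = ((LINT y|lborel. F (x - y) * g (y + d)) - (LINT y|lborel. F (x - y) * g y)) / d"
    using conv_L_integrable[OF F lborel_integrable_shift[OF g, of d], of x] conv_L_integrable[OF F g, of x]
    unfolding conv_L_def q_def by (simp add: algebra_simps diff_divide_distrib)
  also have "\<dots> = (conv_L F g (x + d) - conv_L F g x) / d"
    using conv_L_shift[of F g d x] unfolding conv_L_def by simp
  finally show ?thesis .
qed

section \<open>Integrated difference quotients of continuous functions\<close>

lemma right_average_limit:
  fixes f :: "real \<Rightarrow> real"
  assumes c: "isCont f b" and i: "\<And>a c. f integrable_on {a..c}"
  shows "(\<lambda>n. integral {b..b + 1 / Suc n} f / (1 / Suc n)) \<longlonglongrightarrow> f b"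
proof (rule LIMSEQ_I)
  fix e :: real assume e: "e > 0"
  obtain s where s: "s > 0" "\<And>x. \<bar>x - b\<bar> < s \<Longrightarrow> \<bar>f x - f b\<bar> \<le> e / 2"
    using c[unfolded continuous_at_eps_delta, rule_format, of "e / 2"] e
    by (force simp: dist_real_def)
  obtain M :: nat where M: "1 / s < M" using reals_Archimedean2 by blast
  show "\<exists>no. \<forall>n\<ge>no. norm (integral {b..b + 1 / Suc n} f / (1 / Suc n) - f b) < e"
  proof (intro exI allI impI)
    fix n assume n: "n \<ge> M"
    define d where "d = 1 / real (Suc n)"
    have d0: "d > 0" unfolding d_def by simp
    have "1 / s < Suc n" using M n by linarith
    then have ds: "d < s" unfolding d_def using s(1) by (simp add: field_simps)
    have ic: "(\<lambda>x. c) integrable_on {b..b+d}" for c :: real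
      by (rule integrable_continuous_interval) (rule continuous_on_const)
    have "\<bar>integral {b..b+d} f - d * f b\<bar> = \<bar>integral {b..b+d} (\<lambda>x. f x - f b)\<bar>"
      using integral_diff[OF i ic] d0 by simp
    also have "\<dots> \<le> integral {b..b+d} (\<lambda>x. e / 2)"
    proof -
      have "norm (integral {b..b+d} (\<lambda>x. f x - f b)) \<le> integral {b..b+d} (\<lambda>x. e / 2)"
        by (rule integral_norm_bound_integral[OF integrable_diff[OF i ic] ic]) (use ds d0 s(2) in simp)
      then show ?thesis by simp
    qed
    also have "\<dots> = d * (e / 2)" using d0 by simp
    finally have "\<bar>integral {b..b+d} f / d - f b\<bar> \<le> e / 2"
      using d0 by (simp add: field_simps)
    then show "norm (integral {b..b + 1 / Suc n} f / (1 / Suc n) - f b) < e"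
      using e unfolding d_def by simp
  qed
qed

lemma integral_difference_quotient:
  fixes f :: "real \<Rightarrow> real"
  assumes c: "\<And>x. isCont f x" and ab: "a \<le> b" and d: "d > 0"
  shows "integral {a..b} (\<lambda>x. (f (x + d) - f x) / d) = (integral {b..b+d} f - integral {a..a+d} f) / d"
proof -
  have cf: "continuous_on UNIV f" by (simp add: c continuous_at_imp_continuous_on)
  have i: "f integrable_on {u..v}" for u v
    by (rule integrable_continuous_interval) (simp add: c continuous_at_imp_continuous_on)
  have i2: "(\<lambda>x. f (x + d)) integrable_on {u..v}" for u v
    by (rule integrable_continuous_interval) (intro continuous_on_compose2[OF cf] continuous_intros, auto)
  have "integral {a..b} (\<lambda>x. f (x + d)) = integral {a+d..b+d} f"
    using integral_shift_real_ivl[of "a+d" d "b+d" f] by simp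
  moreover have "integral {a..a+d} f + integral {a+d..b+d} f = integral {a..b+d} f"
    and "integral {a..b} f + integral {b..b+d} f = integral {a..b+d} f"
    by (rule Henstock_Kurzweil_Integration.integral_combine; use ab d i in auto)+
  ultimately show ?thesis
    using i i2 by (simp add: integral_diff integral_divide algebra_simps)
qed

lemma integral_difference_quotient_limit:
  fixes f :: "real \<Rightarrow> real"
  assumes c: "\<And>x. isCont f x" and ab: "a \<le> b"
  shows "(\<lambda>n. integral {a..b} (\<lambda>x. (f (x + 1 / Suc n) - f x) / (1 / Suc n))) \<longlonglongrightarrow> f b - f a"
proof -
  have i: "f integrable_on {u..v}" for u v
    by (rule integrable_continuous_interval) (simp add: c continuous_at_imp_continuous_on)
  have "(\<lambda>n. integral {b..b + 1 / Suc n} f / (1 / Suc n) - integral {a..a + 1 / Suc n} f / (1 / Suc n))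
        \<longlonglongrightarrow> f b - f a"
    by (intro tendsto_diff right_average_limit c i)
  moreover have "integral {a..b} (\<lambda>x. (f (x + 1 / Suc n) - f x) / (1 / Suc n))
      = integral {b..b + 1 / Suc n} f / (1 / Suc n) - integral {a..a + 1 / Suc n} f / (1 / Suc n)" for n
    using integral_difference_quotient[OF c ab, of "1 / Suc n"] by (simp add: algebra_simps)
  ultimately show ?thesis by simp
qed

section \<open>Identification of the primitive of \<open>f * g\<close>\<close>

text \<open>The Steklov averages are admissible approximations in the definition of \<open>H\<close>, and their
  convolutions with \<open>f\<close> integrate to increments of \<open>F * g\<close> in the limit.\<close>

lemma conv_L1_prim_increment:
  fixes F g H :: "real \<Rightarrow> real"
  assumes F: "BC F" and g: "integrable lborel g" and H: "is_conv_L1_prim F g H" and ab: "a \<le> b"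
  shows "H b - H a = conv_L F g b - conv_L F g a"
proof -
  define gn where "gn = (\<lambda>n::nat. steklov g (1 / Suc n))"
  have "\<forall>n. L1 (gn n) \<and> BV (gn n)"
    unfolding gn_def L1_def using steklov_integrable[OF g] steklov_BV[OF g] by simp
  moreover have "(\<lambda>n. LINT y|lborel. \<bar>gn n y - g y\<bar>) \<longlonglongrightarrow> 0"
    unfolding gn_def by (rule steklov_L1_convergence[OF g])
  ultimately have approx: "\<forall>e>0. \<forall>\<^sub>F n in sequentially. \<forall>a b. a \<le> b \<longrightarrow>
        \<bar>integral {a..b} (conv_BV F (gn n)) - (H b - H a)\<bar> \<le> e"
    using H unfolding is_conv_L1_prim_def by blast
  have "(\<lambda>n. integral {a..b} (conv_BV F (gn n))) \<longlonglongrightarrow> H b - H a"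
  proof (rule tendstoI)
    fix e :: real assume "e > 0"
    then have "\<forall>\<^sub>F n in sequentially. \<forall>a b. a \<le> b \<longrightarrow>
        \<bar>integral {a..b} (conv_BV F (gn n)) - (H b - H a)\<bar> \<le> e / 2"
      using approx half_gt_zero by blast
    then show "\<forall>\<^sub>F n in sequentially. dist (integral {a..b} (conv_BV F (gn n))) (H b - H a) < e"
      by eventually_elim (use ab \<open>e > 0\<close> in \<open>force simp: dist_real_def\<close>)
  qed
  moreover have "(\<lambda>n. integral {a..b} (conv_BV F (gn n))) \<longlonglongrightarrow> conv_L F g b - conv_L F g a"
    using integral_difference_quotient_limit[OF conv_L_continuous[OF F g] ab]
    unfolding gn_def conv_BV_steklov[OF F g] .
  ultimately show ?thesis by (rule LIMSEQ_unique)
qed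

lemma eq_if_same_increments:
  fixes H P :: "real \<Rightarrow> real"
  assumes H0: "(H \<longlongrightarrow> 0) at_bot" and P0: "(P \<longlongrightarrow> 0) at_bot"
    and incr: "\<And>a b. a \<le> b \<Longrightarrow> H b - H a = P b - P a"
  shows "H = P"
proof
  fix b
  have "\<forall>\<^sub>F a in at_bot. H b - P b + P a = H a"
    using eventually_le_at_bot[of b] by eventually_elim (use incr in force)
  then have "((\<lambda>a. H b - P b + P a) \<longlongrightarrow> 0) at_bot"
    using H0 by (simp add: tendsto_cong)
  moreover have "((\<lambda>a. H b - P b + P a) \<longlongrightarrow> H b - P b + 0) at_bot"
    by (intro tendsto_intros P0)
  ultimately have "H b - P b + 0 = 0" using tendsto_unique[OF trivial_limit_at_bot_linorder] by blast
  then show "H b = P b" by simp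
qed

lemma conv_L1_prim_eq_conv_L:
  fixes F g H :: "real \<Rightarrow> real"
  assumes F: "BC F" and g: "integrable lborel g" and H: "is_conv_L1_prim F g H"
  shows "H = conv_L F g"
proof (rule eq_if_same_increments)
  show "(H \<longlongrightarrow> 0) at_bot" using H unfolding is_conv_L1_prim_def BC_def by blast
  show "(conv_L F g \<longlongrightarrow> 0) at_bot" by (rule conv_L_at_bot[OF F g])
qed (rule conv_L1_prim_increment[OF F g H])

text \<open>A test function has continuous, compactly supported derivative, so it can be paired with
  any continuous function.\<close>

lemma test_fun_deriv:
  assumes "test_fun \<phi>"
  obtains R where "\<And>x. isCont (deriv \<phi>) x" "\<And>x. \<bar>x\<bar> > R \<Longrightarrow> deriv \<phi> x = 0"
proof -
  from assms obtain R where d: "\<And>n x. ((deriv ^^ n) \<phi>) differentiable (at x)"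
    and R: "\<And>x. \<bar>x\<bar> > R \<Longrightarrow> \<phi> x = 0"
    unfolding test_fun_def by blast
  have "isCont (deriv \<phi>) x" for x
    using differentiable_imp_continuous_within[OF d[of 1 x]] by simp
  moreover have "deriv \<phi> x = 0" if x: "\<bar>x\<bar> > R" for x
  proof -
    have D1: "(\<phi> has_real_derivative deriv \<phi> x) (at x)"
      using d[of 0 x] DERIV_deriv_iff_real_differentiable by simp
    have "open {x::real. R < \<bar>x\<bar>}" by (intro open_Collect_less continuous_intros)
    then have "(\<phi> has_real_derivative 0) (at x)"
      using has_field_derivative_transform_within_open[of "\<lambda>_. 0" 0 x] x R by auto
    with D1 show ?thesis by (rule DERIV_unique)
  qed
  ultimately show ?thesis using that by blast
qed

lemma integrable_continuous_times_test_deriv: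
  fixes P :: "real \<Rightarrow> real"
  assumes P: "\<And>x. isCont P x" and t: "test_fun \<phi>"
  shows "integrable lborel (\<lambda>x. P x * deriv \<phi> x)"
proof -
  obtain R where c: "\<And>x. isCont (deriv \<phi>) x" and z: "\<And>x. \<bar>x\<bar> > R \<Longrightarrow> deriv \<phi> x = 0"
    using test_fun_deriv[OF t] by blast
  have "continuous_on {-R..R} (\<lambda>x. P x * deriv \<phi> x)"
    by (intro continuous_at_imp_continuous_on ballI continuous_intros P c)
  then have "integrable lborel (\<lambda>x. indicator {-R..R} x *\<^sub>R (P x * deriv \<phi> x))"
    by (intro borel_integrable_compact) auto
  moreover have "(\<lambda>x. indicator {-R..R} x *\<^sub>R (P x * deriv \<phi> x)) = (\<lambda>x. P x * deriv \<phi> x)"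
  proof
    fix x
    show "indicator {-R..R} x *\<^sub>R (P x * deriv \<phi> x) = P x * deriv \<phi> x"
    proof (cases "x \<in> {-R..R}")
      case False
      then have "R < \<bar>x\<bar>" by (auto simp: abs_if)
      then show ?thesis using z[of x] False by simp
    qed simp
  qed
  ultimately show ?thesis by simp
qed

theorem mainTheorem14:
  fixes F g G H :: "real \<Rightarrow> real"
  assumes F: "BC F"
    and g: "L1 g"
    and G: "\<And>x. G x = (LINT y:{..x}|lborel. g y)"
    and H: "is_conv_L1_prim F g H"
  shows "same_dist_deriv H (conv_L F g) \<and> same_dist_deriv H (conv_BV F G)
       \<and> (\<forall>\<alpha> \<beta> :: ereal. \<alpha> < \<beta> \<longrightarrow>
            (\<exists>Ha Hb Pa Pb Qa Qb.
               ext_val H \<alpha> Ha \<and> ext_val H \<beta> Hb \<and>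
               ext_val (conv_L F g) \<alpha> Pa \<and> ext_val (conv_L F g) \<beta> Pb \<and>
               ext_val (conv_BV F G) \<alpha> Qa \<and> ext_val (conv_BV F G) \<beta> Qb \<and>
               Hb - Ha = Pb - Pa \<and> Pb - Pa = Qb - Qa))"
proof -
  have g': "integrable lborel g" using g unfolding L1_def .
  have "G = prim g" using G unfolding prim_def by auto
  then have QP: "conv_BV F G = conv_L F g" using conv_BV_prim[OF F g'] by auto
  have HP: "H = conv_L F g" by (rule conv_L1_prim_eq_conv_L[OF F g' H])
  have "same_dist_deriv (conv_L F g) (conv_L F g)"
    unfolding same_dist_deriv_def
    using integrable_continuous_times_test_deriv[OF conv_L_continuous[OF F g']] by auto
  moreover obtain L where L: "(F \<longlongrightarrow> L) at_top" using F unfolding BC_def by blast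
  have "ext_val (conv_L F g) t
          (if t = \<infinity> then L * (LINT y|lborel. g y) else if t = -\<infinity> then 0
           else conv_L F g (real_of_ereal t))" for t
    unfolding ext_val_def using conv_L_at_top[OF F g' L] conv_L_at_bot[OF F g'] by auto
  ultimately show ?thesis unfolding HP QP by blast
qed

end
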